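(* There exists a constant $C>0$ such that for any $\epsilon\in(0,\tfrac12]$ there exists a ReLU neural network $\Xi_\epsilon:\mathbb{R}^2\to\mathbb{R}$ such that \[ \sup_{\xi\in[0,2\pi-\epsilon]}|\xi-\Xi_\epsilon(\cos\xi,\sin\xi)|\le\epsilon, \] $\Xi_\epsilon(\cos\xi,\sin\xi)\in[0,2\pi]$ for all $\xi\in[0,2\pi]$, and $\mathrm{depth}(\Xi_\epsilon)\le C\log(\epsilon^{-1})^2$, $\mathrm{width}(\Xi_\epsilon)\le C$.
   Context: ReLU is $\sigma(x)=\max(x,0)$. For a neural network, depth is the number of hidden layers and width the maximal number of neurons in a hidden layer. *)

theory Defs
  imports "HOL-Analysis.Analysis"
begin

type_synonym layer = "real list list \<times> real list"

definition relu :: "real \<Rightarrow> real" where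
  "relu t = max t 0"

definition apply_layer :: "layer \<Rightarrow> real list \<Rightarrow> real list" where
  "apply_layer L x = map2 (\<lambda>row bi. sum_list (map2 (*) row x) + bi) (fst L) (snd L)"

fun realize :: "layer list \<Rightarrow> real list \<Rightarrow> real list" where
  "realize [] x = x"
| "realize [L] x = apply_layer L x"
| "realize (L # Ls) x = realize Ls (map relu (apply_layer L x))"

fun wf_net :: "nat \<Rightarrow> nat \<Rightarrow> layer list \<Rightarrow> bool" where
  "wf_net din dout [] = False"
| "wf_net din dout (L # Ls) =
     (let m = length (snd L) in
        length (fst L) = m \<and> (\<forall>row \<in> set (fst L). length row = din) \<and>
        (if Ls = [] then m = dout else wf_net m dout Ls))"

definition depth :: "layer list \<Rightarrow> nat" where
  "depth Ls = length Ls - 1"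

definition width :: "layer list \<Rightarrow> nat" where
  "width Ls = Max (insert 0 (set (map (\<lambda>L. length (snd L)) (butlast Ls))))"

definition net_eval2 :: "layer list \<Rightarrow> real \<Rightarrow> real \<Rightarrow> real" where
  "net_eval2 N x y = hd (realize N [x, y])"

end

theory Submission
  imports Defs
begin

text \<open>Let \<open>c\<^sub>j = \<pi>/2\<^sup>j\<close>, \<open>\<theta>\<^sub>0 = \<xi>\<close> and \<open>\<theta>\<^sub>j\<^sub>+\<^sub>1 = \<bar>\<theta>\<^sub>j - c\<^sub>j\<bar> \<in> [0, 2c\<^sub>j\<^sub>+\<^sub>1]\<close>. A rotation by
  \<open>-c\<^sub>j\<close> followed by taking the absolute value of the second coordinate maps
  \<open>(cos \<theta>\<^sub>j, sin \<theta>\<^sub>j)\<close> to \<open>(cos \<theta>\<^sub>j\<^sub>+\<^sub>1, sin \<theta>\<^sub>j\<^sub>+\<^sub>1)\<close>, so a ReLU network of constant width can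
  fold the input point step by step. Conversely \<open>\<theta>\<^sub>j = c\<^sub>j \<plusminus> \<theta>\<^sub>j\<^sub>+\<^sub>1\<close>, and the sign is that of an
  affine "sign hint" in \<open>(cos \<theta>\<^sub>j, sin \<theta>\<^sub>j)\<close>: \<open>2 sin (\<theta>\<^sub>j - c\<^sub>j)\<close> for \<open>j \<ge> 1\<close>, and for
  \<open>j = 0\<close> a steep function of \<open>sin \<xi>\<close> which is correct on \<open>[0, 2\<pi> - \<epsilon>]\<close>.
  The composition of these unfolding maps is always a clamped unit-speed ramp
  \<open>t \<mapsto> slide P Q (t - L)\<close>, so the network carries it as three numbers alongside the
  folded point. Evaluating the final ramp at \<open>t = 0\<close> instead of at the unknown \<open>\<theta>\<^sub>n\<close>
  costs at most \<open>\<theta>\<^sub>n \<le> 2\<pi>/2\<^sup>n\<close>, so \<open>n \<approx> log\<^sub>2(1/\<epsilon>)\<close> folding steps suffice.\<close>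

lemma realize_append:
  "A \<noteq> [] \<Longrightarrow> B \<noteq> [] \<Longrightarrow> realize (A @ B) x = realize B (map relu (realize A x))"
proof (induction A arbitrary: x)
  case (Cons L A)
  then show ?case by (cases A; cases B) auto
qed simp

lemma wf_net_append:
  "wf_net a m A \<Longrightarrow> wf_net m b B \<Longrightarrow> wf_net a b (A @ B)"
proof (induction A arbitrary: a)
  case (Cons L A)
  then show ?case by (cases "A = []") (auto simp: Let_def elim: wf_net.elims)
qed simp

lemma width_le: "(\<And>L. L \<in> set N \<Longrightarrow> length (snd L) \<le> w) \<Longrightarrow> width N \<le> w"
  unfolding width_def by (auto dest: in_set_butlastD)

text \<open>\<open>slide P Q\<close> stays at \<open>P\<close> for \<open>s \<le> 0\<close>, then moves towards \<open>Q\<close> with unit speed and stops there.\<close>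

definition slide :: "real \<Rightarrow> real \<Rightarrow> real \<Rightarrow> real" where
  "slide P Q s = P - relu (relu s - relu (Q - P)) + relu (relu s - relu (P - Q))"

definition signed_unfold :: "real \<Rightarrow> real \<Rightarrow> real \<Rightarrow> real" where
  "signed_unfold c a t = c + max (- t) (min a t)"

lemma slide_nonpos: "s \<le> 0 \<Longrightarrow> slide P Q s = P"
  by (simp add: slide_def relu_def)

lemma slide_lipschitz: "\<bar>slide P Q s - slide P Q s'\<bar> \<le> \<bar>s - s'\<bar>"
  by (cases "P \<le> Q") (auto simp: slide_def relu_def max_def)

lemma slide_signed_unfold:
  assumes "0 \<le> t"
  shows "slide P Q (signed_unfold c a t - L) =
    slide (slide P Q (c - L)) (slide P Q (c + a - L))
      (t - (relu (L - c) + relu (c - L - \<bar>Q - P\<bar>)))"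
  using assms
  by (cases "P \<le> Q"; cases "0 \<le> a") (auto simp: slide_def relu_def signed_unfold_def max_def min_def)

lemma signed_unfold_abs:
  "(0 \<le> d \<Longrightarrow> d \<le> a) \<Longrightarrow> (d < 0 \<Longrightarrow> a \<le> d) \<Longrightarrow> signed_unfold c a \<bar>d\<bar> = c + d"
  by (cases "0 \<le> d") (auto simp: signed_unfold_def max_def min_def)

text \<open>Each of the five state values \<open>v\<close> is passed through a ReLU layer as \<open>relu v\<close> and
  \<open>relu (-v)\<close>, from which the next layer recovers \<open>v\<close>; \<open>signed_row\<close> reads this encoding.\<close>

fun encode :: "real \<times> real \<times> real \<times> real \<times> real \<Rightarrow> real list" where
  "encode (X, Y, P, Q, L) = [X, -X, Y, -Y, P, -P, Q, -Q, L, -L]"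

definition signed_row :: "real \<Rightarrow> real \<Rightarrow> real \<Rightarrow> real \<Rightarrow> real \<Rightarrow> real list" where
  "signed_row a b p q l = [a, -a, b, -b, p, -p, q, -q, l, -l]"

text \<open>The point \<open>(X, Y) = (cos \<theta>, sin \<theta>)\<close> becomes \<open>(cos \<bar>\<theta> - c\<bar>, sin \<bar>\<theta> - c\<bar>)\<close>, and the ramp
  \<open>(P, Q, L)\<close> is precomposed with the unfolding map, as computed in \<open>slide_signed_unfold\<close>.\<close>

fun fold_step :: "real \<Rightarrow> real \<times> real \<times> real \<Rightarrow> real \<times> real \<times> real \<times> real \<times> real
    \<Rightarrow> real \<times> real \<times> real \<times> real \<times> real" where
  "fold_step c (ax, ay, ab) (X, Y, P, Q, L) =
    (X * cos c + Y * sin c, \<bar>Y * cos c - X * sin c\<bar>,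
     slide P Q (c - L), slide P Q (c + (ax * X + ay * Y + ab) - L),
     relu (L - c) + relu (c - L - \<bar>Q - P\<bar>))"

fun fold_layers :: "real \<Rightarrow> real \<times> real \<times> real \<Rightarrow> layer list" where
  "fold_layers c (ax, ay, ab) =
  [([signed_row (- sin c) (cos c) 0 0 0, signed_row (sin c) (- cos c) 0 0 0,
     signed_row (cos c) (sin c) 0 0 0, signed_row (- cos c) (- sin c) 0 0 0,
     signed_row 0 0 1 0 0, signed_row 0 0 (-1) 0 0, signed_row 0 0 0 1 0, signed_row 0 0 0 (-1) 0,
     signed_row 0 0 0 0 1, signed_row 0 0 0 0 (-1), signed_row 0 0 (-1) 1 0, signed_row 0 0 1 (-1) 0,
     signed_row 0 0 0 0 (-1), signed_row ax ay 0 0 (-1), signed_row 0 0 0 0 1],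
    [0, 0, 0, 0, 0, 0, 0, 0, 0, 0, 0, 0, c, c + ab, -c]),
   ([[0,0,0,0,0,0,0,0,0,0,-1,0,1,0,0],
     [0,0,0,0,0,0,0,0,0,0,0,-1,1,0,0],
     [0,0,0,0,0,0,0,0,0,0,-1,0,0,1,0],
     [0,0,0,0,0,0,0,0,0,0,0,-1,0,1,0],
     [0,0,0,0,0,0,0,0,-1,1,-1,-1,0,0,0],
     [0,0,0,0,0,0,0,0,0,0,0,0,0,0,1],
     [1,0,0,0,0,0,0,0,0,0,0,0,0,0,0],
     [0,1,0,0,0,0,0,0,0,0,0,0,0,0,0],
     [0,0,1,0,0,0,0,0,0,0,0,0,0,0,0],
     [0,0,0,1,0,0,0,0,0,0,0,0,0,0,0],
     [0,0,0,0,1,0,0,0,0,0,0,0,0,0,0],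
     [0,0,0,0,0,1,0,0,0,0,0,0,0,0,0],
     [0,0,0,0,0,0,1,0,0,0,0,0,0,0,0],
     [0,0,0,0,0,0,0,1,0,0,0,0,0,0,0]],
    [0, 0, 0, 0, c, 0, 0, 0, 0, 0, 0, 0, 0, 0]),
   ([[0,0,0,0,0,0,0,0,1,-1,0,0,0,0],
     [0,0,0,0,0,0,0,0,-1,1,0,0,0,0],
     [0,0,0,0,0,0,1,1,0,0,0,0,0,0],
     [0,0,0,0,0,0,-1,-1,0,0,0,0,0,0],
     [-1,1,0,0,0,0,0,0,0,0,1,-1,0,0],
     [1,-1,0,0,0,0,0,0,0,0,-1,1,0,0],
     [0,0,-1,1,0,0,0,0,0,0,1,-1,0,0],
     [0,0,1,-1,0,0,0,0,0,0,-1,1,0,0],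
     [0,0,0,0,1,1,0,0,0,0,0,0,0,0],
     [0,0,0,0,-1,-1,0,0,0,0,0,0,0,0]],
    [0, 0, 0, 0, 0, 0, 0, 0, 0, 0])]"

lemma relu_relu: "relu (relu x) = relu x"
  and relu_uminus: "relu (- x) = relu x - x"
  and relu_uminus_diff: "relu (- a - b) = relu (a + b) - a - b"
  and relu_relu_diff: "relu (relu x - x) = relu x - x"
  and relu_abs: "relu x + relu (- x) = \<bar>x\<bar>"
  by (simp_all add: relu_def)

lemma realize_fold_layers:
  "realize (fold_layers c w) (map relu (encode s)) = encode (fold_step c w s)"
  by (cases w; cases s)
    (simp add: signed_row_def apply_layer_def relu_relu slide_def relu_uminus relu_uminus_diff
      relu_relu_diff algebra_simps flip: relu_abs)

definition fold_center :: "nat \<Rightarrow> real" where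
  "fold_center j = pi / 2 ^ j"

text \<open>For \<open>j = 0\<close> the hint \<open>-\<pi> cos \<xi> - (24/\<epsilon>) sin \<xi> - \<pi>\<close> has the sign of \<open>\<xi> - \<pi>\<close> and dominates
  \<open>\<bar>\<xi> - \<pi>\<bar>\<close>: the cosine term takes over near \<open>\<xi> = 0\<close>, the steep sine term elsewhere; near
  \<open>\<xi> = 2\<pi>\<close> it fails, which is why the accuracy claim excludes \<open>(2\<pi> - \<epsilon>, 2\<pi>]\<close>.\<close>

definition sign_hint_coeffs :: "real \<Rightarrow> nat \<Rightarrow> real \<times> real \<times> real" where
  "sign_hint_coeffs \<epsilon> j =
    (if j = 0 then (- pi, - 24 / \<epsilon>, - pi)
     else (- 2 * sin (fold_center j), 2 * cos (fold_center j), 0))"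

fun fold_state :: "real \<Rightarrow> real \<Rightarrow> real \<Rightarrow> nat \<Rightarrow> real \<times> real \<times> real \<times> real \<times> real" where
  "fold_state \<epsilon> x y 0 = (x, y, 0, 2 * pi, 0)"
| "fold_state \<epsilon> x y (Suc j) = fold_step (fold_center j) (sign_hint_coeffs \<epsilon> j) (fold_state \<epsilon> x y j)"

definition input_layer :: layer where
  "input_layer = ([[1, 0], [-1, 0], [0, 1], [0, -1], [0, 0], [0, 0], [0, 0], [0, 0], [0, 0], [0, 0]],
                  [0, 0, 0, 0, 0, 0, 2 * pi, - 2 * pi, 0, 0])"

definition output_layers :: "layer list" where
  "output_layers = [([[0, 0, 0, 0, 1, -1, 0, 0, 0, 0], [0, 0, 0, 0, 1, -1, 0, 0, 0, 0]], [0, - 2 * pi]),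
                    ([[1, -1]], [0])]"

definition fold_net :: "real \<Rightarrow> nat \<Rightarrow> layer list" where
  "fold_net \<epsilon> n =
    input_layer # concat (map (\<lambda>j. fold_layers (fold_center j) (sign_hint_coeffs \<epsilon> j)) [0..<n])"

definition angle_net :: "real \<Rightarrow> nat \<Rightarrow> layer list" where
  "angle_net \<epsilon> n = fold_net \<epsilon> n @ output_layers"

fun estimate :: "real \<times> real \<times> real \<times> real \<times> real \<Rightarrow> real" where
  "estimate (X, Y, P, Q, L) = P"

lemma fold_layers_nonempty: "fold_layers c w \<noteq> []"
  by (cases w) simp

lemma fold_net_nonempty: "fold_net \<epsilon> n \<noteq> []"
  by (simp add: fold_net_def)

lemma fold_net_Suc:
  "fold_net \<epsilon> (Suc n) = fold_net \<epsilon> n @ fold_layers (fold_center n) (sign_hint_coeffs \<epsilon> n)"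
  by (simp add: fold_net_def)

lemma realize_fold_net: "realize (fold_net \<epsilon> n) [x, y] = encode (fold_state \<epsilon> x y n)"
proof (induction n)
  case 0
  show ?case by (simp add: fold_net_def input_layer_def apply_layer_def)
next
  case (Suc n)
  then show ?case
    by (simp add: fold_net_Suc realize_append fold_net_nonempty fold_layers_nonempty realize_fold_layers)
qed

lemma net_eval2_angle_net:
  "net_eval2 (angle_net \<epsilon> n) x y =
    relu (estimate (fold_state \<epsilon> x y n)) - relu (estimate (fold_state \<epsilon> x y n) - 2 * pi)"
proof -
  obtain X Y P Q L where s: "fold_state \<epsilon> x y n = (X, Y, P, Q, L)"
    by (cases "fold_state \<epsilon> x y n") auto
  have "realize (angle_net \<epsilon> n) [x, y] = realize output_layers (map relu (encode (X, Y, P, Q, L)))"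
    using s
    by (simp add: angle_net_def realize_append fold_net_nonempty output_layers_def realize_fold_net)
  then show ?thesis
    using s
    by (simp add: net_eval2_def output_layers_def apply_layer_def relu_uminus relu_relu algebra_simps)
qed

lemma wf_net_angle_net: "wf_net 2 1 (angle_net \<epsilon> n)"
proof -
  have "wf_net 10 10 (fold_layers c w)" for c w
    by (cases w) (simp add: signed_row_def)
  then have "wf_net 2 10 (fold_net \<epsilon> n)"
  proof (induction n)
    case 0
    show ?case by (simp add: fold_net_def input_layer_def)
  next
    case (Suc n)
    then show ?case by (simp add: fold_net_Suc wf_net_append)
  qed
  then show ?thesis
    unfolding angle_net_def by (rule wf_net_append) (simp add: output_layers_def)
qed

lemma depth_angle_net: "depth (angle_net \<epsilon> n) = 3 * n + 2"
proof -
  have "length (fold_layers c w) = 3" for c w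
    by (cases w) simp
  then show ?thesis
    by (simp add: depth_def angle_net_def fold_net_def output_layers_def length_concat o_def sum_list_triv)
qed

lemma width_angle_net: "width (angle_net \<epsilon> n) \<le> 15"
proof (rule width_le)
  have layers: "\<forall>L \<in> set (fold_layers c w). length (snd L) \<le> 15" for c w
    by (cases w) simp
  show "length (snd L) \<le> 15" if "L \<in> set (angle_net \<epsilon> n)" for L
    using that by (auto simp: angle_net_def fold_net_def input_layer_def output_layers_def
        dest: layers[rule_format])
qed

lemma sin_ge_half_arg:
  fixes z :: real
  assumes "0 \<le> z" "z \<le> pi / 2"
  shows "z / 2 \<le> sin z"
proof (cases "z \<le> pi / 3")
  case True
  have "sin 0 - 0 / 2 \<le> sin z - z / 2"
  proof (rule DERIV_nonneg_imp_nondecreasing[OF assms(1)])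
    fix u assume u: "0 \<le> u" "u \<le> z"
    have "cos (pi / 3) \<le> cos u"
      by (rule cos_monotone_0_pi_le) (use u True in auto)
    then have "0 \<le> cos u - 1 / 2"
      by (simp add: cos_60)
    moreover have "((\<lambda>x. sin x - x / 2) has_real_derivative cos u - 1 / 2) (at u)"
      by (auto intro!: derivative_eq_intros)
    ultimately show "\<exists>y. ((\<lambda>x. sin x - x / 2) has_real_derivative y) (at u) \<and> 0 \<le> y"
      by blast
  qed
  then show ?thesis by simp
next
  case False
  have "sin (pi / 3) \<le> sin z"
    by (rule sin_monotone_2pi_le) (use False assms in auto)
  moreover have "1.7 \<le> sqrt 3"
    by (rule real_le_rsqrt) (simp add: power2_eq_square)
  moreover have "pi \<le> 3.2"
    using pi_approx by simp
  ultimately show ?thesis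
    using assms by (simp add: sin_60)
qed

lemma two_sin_sign_bounds:
  fixes d :: real
  assumes "\<bar>d\<bar> \<le> pi / 2"
  shows "(0 \<le> d \<longrightarrow> d \<le> 2 * sin d) \<and> (d < 0 \<longrightarrow> 2 * sin d \<le> d)"
  using sin_ge_half_arg[of d] sin_ge_half_arg[of "- d"] assms by auto

lemma first_sign_hint_below_pi:
  fixes \<xi> K :: real
  assumes "0 \<le> \<xi>" "\<xi> < pi" "2 \<le> K"
  shows "- pi * cos \<xi> - K * sin \<xi> - pi \<le> \<xi> - pi"
proof (cases "\<xi> \<le> pi / 2")
  case True
  have "0 \<le> cos \<xi>" "0 \<le> sin \<xi>"
    using assms True by (auto intro!: cos_ge_zero sin_ge_zero)
  then have "0 \<le> pi * cos \<xi>" "0 \<le> K * sin \<xi>"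
    using assms by simp_all
  then show ?thesis
    using assms by linarith
next
  case False
  define w where "w = pi - \<xi>"
  have w: "0 \<le> w" "w \<le> pi / 2"
    using assms False by (auto simp: w_def)
  have "K * (w / 2) \<le> K * sin \<xi>"
    using sin_ge_half_arg[OF w] assms by (intro mult_left_mono) (auto simp: w_def sin_diff)
  moreover have "- pi \<le> pi * cos \<xi>"
    using cos_ge_minus_one[of \<xi>] mult_left_mono[of "-1" "cos \<xi>" pi] by simp
  moreover have "2 * (w / 2) \<le> K * (w / 2)"
    using w assms by (intro mult_right_mono) auto
  ultimately show ?thesis
    by (simp add: w_def)
qed

lemma first_sign_hint_above_pi:
  fixes \<xi> \<epsilon> K :: real
  assumes "0 < \<epsilon>" "pi \<le> \<xi>" "\<xi> \<le> 2 * pi - \<epsilon>" "pi + 2 \<le> K" "24 \<le> K * \<epsilon>"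
  shows "\<xi> - pi \<le> - pi * cos \<xi> - K * sin \<xi> - pi"
proof -
  define u where "u = \<xi> - pi"
  have trig: "- pi * cos \<xi> - K * sin \<xi> - pi = pi * cos u + K * sin u - pi"
    by (simp add: u_def sin_diff cos_diff)
  show ?thesis
  proof (cases "u \<le> pi / 2")
    case True
    have u: "0 \<le> u" "u \<le> pi / 2"
      using assms True by (auto simp: u_def)
    have "0 \<le> sin u" "0 \<le> cos u"
      using u by (auto intro!: sin_ge_zero cos_ge_zero)
    then have "1 \<le> sin u + cos u"
      using sin_cos_squared_add[of u] sin_le_one[of u] cos_le_one[of u]
      by (smt (verit) mult_left_le power2_eq_square)
    then have "(K - pi) * sin u \<le> pi * cos u + K * sin u - pi"
      using mult_left_mono[of 1 "sin u + cos u" pi] by (simp add: algebra_simps)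
    moreover have "(K - pi) * (u / 2) \<le> (K - pi) * sin u"
      using sin_ge_half_arg[OF u] assms by (intro mult_left_mono) auto
    moreover have "2 * (u / 2) \<le> (K - pi) * (u / 2)"
      using u assms by (intro mult_right_mono) auto
    ultimately show ?thesis
      using trig u_def by linarith
  next
    case False
    have v: "\<epsilon> \<le> pi - u" "pi - u \<le> pi / 2"
      using assms False by (auto simp: u_def)
    have "\<epsilon> / 2 \<le> sin u"
      using sin_ge_half_arg[of "pi - u"] v assms by (simp add: sin_diff)
    then have "K * (\<epsilon> / 2) \<le> K * sin u"
      using assms by (intro mult_left_mono) auto
    moreover have "- pi \<le> pi * cos u"
      using cos_ge_minus_one[of u] mult_left_mono[of "-1" "cos u" pi] by simp
    ultimately show ?thesis
      using trig u_def assms pi_less_4 by linarith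
  qed
qed

fun folded_angle :: "real \<Rightarrow> nat \<Rightarrow> real" where
  "folded_angle \<xi> 0 = \<xi>"
| "folded_angle \<xi> (Suc j) = \<bar>folded_angle \<xi> j - fold_center j\<bar>"

definition sign_hint :: "real \<Rightarrow> nat \<Rightarrow> real \<Rightarrow> real" where
  "sign_hint \<epsilon> j \<theta> = (case sign_hint_coeffs \<epsilon> j of (ax, ay, ab) \<Rightarrow> ax * cos \<theta> + ay * sin \<theta> + ab)"

definition decoder :: "real \<Rightarrow> real \<Rightarrow> nat \<Rightarrow> real \<Rightarrow> real" where
  "decoder \<epsilon> \<xi> j t = (case fold_state \<epsilon> (cos \<xi>) (sin \<xi>) j of (X, Y, P, Q, L) \<Rightarrow> slide P Q (t - L))"

lemma fold_center_le_pi: "fold_center j \<le> pi"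
  by (simp add: fold_center_def divide_le_eq)

lemma fold_center_le_half_pi: "1 \<le> j \<Longrightarrow> fold_center j \<le> pi / 2"
  unfolding fold_center_def
  using power_increasing[of 1 j "2::real"] by (simp add: pos_divide_le_eq)

lemma folded_angle_bounds:
  assumes "0 \<le> \<xi>" "\<xi> \<le> 2 * pi"
  shows "0 \<le> folded_angle \<xi> j \<and> folded_angle \<xi> j \<le> 2 * fold_center j"
  using assms by (induction j) (auto simp: fold_center_def)

lemma sign_hint_eq:
  "sign_hint \<epsilon> j \<theta> =
    (if j = 0 then - pi * cos \<theta> - 24 / \<epsilon> * sin \<theta> - pi else 2 * sin (\<theta> - fold_center j))"
  by (simp add: sign_hint_def sign_hint_coeffs_def sin_diff algebra_simps)

lemma fold_state_trig:
  assumes "0 \<le> \<xi>" "\<xi> \<le> 2 * pi"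
  shows "\<exists>P Q L. fold_state \<epsilon> (cos \<xi>) (sin \<xi>) j =
    (cos (folded_angle \<xi> j), sin (folded_angle \<xi> j), P, Q, L) \<and> 0 \<le> L"
proof (induction j)
  case (Suc j)
  then obtain P Q L where
    s: "fold_state \<epsilon> (cos \<xi>) (sin \<xi>) j = (cos (folded_angle \<xi> j), sin (folded_angle \<xi> j), P, Q, L)"
    by blast
  define d where "d = folded_angle \<xi> j - fold_center j"
  have "\<bar>d\<bar> \<le> pi"
    using folded_angle_bounds[OF assms, of j] fold_center_le_pi[of j] by (auto simp: d_def)
  then have "sin \<bar>d\<bar> = \<bar>sin d\<bar>"
    using sin_ge_zero[of d] sin_ge_zero[of "- d"] by (cases "0 \<le> d") auto
  then show ?case
    using s
    by (cases "sign_hint_coeffs \<epsilon> j") (simp add: d_def sin_diff cos_diff relu_def algebra_simps)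
qed simp

lemma decoder_Suc:
  assumes "0 \<le> \<xi>" "\<xi> \<le> 2 * pi" "0 \<le> t"
  shows "decoder \<epsilon> \<xi> (Suc j) t =
    decoder \<epsilon> \<xi> j (signed_unfold (fold_center j) (sign_hint \<epsilon> j (folded_angle \<xi> j)) t)"
proof -
  obtain P Q L where
    s: "fold_state \<epsilon> (cos \<xi>) (sin \<xi>) j = (cos (folded_angle \<xi> j), sin (folded_angle \<xi> j), P, Q, L)"
    using fold_state_trig[OF assms(1,2)] by blast
  show ?thesis
    using s slide_signed_unfold[OF assms(3), of P Q "fold_center j" _ L]
    by (cases "sign_hint_coeffs \<epsilon> j") (simp add: decoder_def sign_hint_def)
qed

lemma signed_unfold_folded_angle:
  assumes "0 < \<epsilon>" "\<epsilon> \<le> 1 / 2" "0 \<le> \<xi>" "\<xi> \<le> 2 * pi - \<epsilon>"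
  shows "signed_unfold (fold_center j) (sign_hint \<epsilon> j (folded_angle \<xi> j)) (folded_angle \<xi> (Suc j)) =
    folded_angle \<xi> j"
proof -
  define d where "d = folded_angle \<xi> j - fold_center j"
  have "(0 \<le> d \<longrightarrow> d \<le> sign_hint \<epsilon> j (folded_angle \<xi> j)) \<and>
        (d < 0 \<longrightarrow> sign_hint \<epsilon> j (folded_angle \<xi> j) \<le> d)"
  proof (cases "j = 0")
    case True
    have "48 \<le> 24 / \<epsilon>"
      using assms by (simp add: field_simps)
    then show ?thesis
      using True assms pi_less_4
        first_sign_hint_below_pi[of \<xi> "24 / \<epsilon>"] first_sign_hint_above_pi[of \<epsilon> \<xi> "24 / \<epsilon>"]
      by (simp add: d_def sign_hint_eq fold_center_def)
  next
    case False
    have "\<xi> \<le> 2 * pi"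
      using assms by linarith
    then have "\<bar>d\<bar> \<le> pi / 2"
      unfolding d_def abs_le_iff
      using folded_angle_bounds[of \<xi> j] fold_center_le_half_pi[of j] False assms by linarith
    moreover have "sign_hint \<epsilon> j (folded_angle \<xi> j) = 2 * sin d"
      using False by (simp add: sign_hint_eq d_def)
    ultimately show ?thesis
      using two_sin_sign_bounds by simp
  qed
  then show ?thesis
    using signed_unfold_abs[of d] by (simp add: d_def)
qed

lemma decoder_folded_angle:
  assumes "0 < \<epsilon>" "\<epsilon> \<le> 1 / 2" "0 \<le> \<xi>" "\<xi> \<le> 2 * pi - \<epsilon>"
  shows "decoder \<epsilon> \<xi> j (folded_angle \<xi> j) = \<xi>"
proof (induction j)
  case 0
  show ?case
    using assms by (simp add: decoder_def slide_def relu_def)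
next
  case (Suc j)
  have "\<xi> \<le> 2 * pi"
    using assms by linarith
  then show ?case
    using decoder_Suc[OF assms(3) _ abs_ge_zero] signed_unfold_folded_angle[OF assms] Suc by simp
qed

lemma estimate_error:
  assumes "0 < \<epsilon>" "\<epsilon> \<le> 1 / 2" "0 \<le> \<xi>" "\<xi> \<le> 2 * pi - \<epsilon>"
  shows "\<bar>estimate (fold_state \<epsilon> (cos \<xi>) (sin \<xi>) n) - \<xi>\<bar> \<le> 2 * fold_center n"
proof -
  have \<xi>: "\<xi> \<le> 2 * pi"
    using assms by linarith
  obtain P Q L where
    s: "fold_state \<epsilon> (cos \<xi>) (sin \<xi>) n = (cos (folded_angle \<xi> n), sin (folded_angle \<xi> n), P, Q, L)"
    and "0 \<le> L"
    using fold_state_trig[OF assms(3) \<xi>] by blast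
  then have "decoder \<epsilon> \<xi> n 0 = estimate (fold_state \<epsilon> (cos \<xi>) (sin \<xi>) n)"
    by (simp add: decoder_def slide_nonpos)
  moreover have "\<bar>decoder \<epsilon> \<xi> n 0 - decoder \<epsilon> \<xi> n (folded_angle \<xi> n)\<bar> \<le> folded_angle \<xi> n"
    using s slide_lipschitz[of P Q "- L" "folded_angle \<xi> n - L"] folded_angle_bounds[OF assms(3) \<xi>, of n]
    by (simp add: decoder_def)
  ultimately show ?thesis
    using decoder_folded_angle[OF assms] folded_angle_bounds[OF assms(3) \<xi>, of n] by simp
qed

lemma angle_net_accuracy:
  assumes "0 < \<epsilon>" "\<epsilon> \<le> 1 / 2" "0 \<le> \<xi>" "\<xi> \<le> 2 * pi - \<epsilon>"
  shows "\<bar>\<xi> - net_eval2 (angle_net \<epsilon> n) (cos \<xi>) (sin \<xi>)\<bar> \<le> 2 * fold_center n"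
  using estimate_error[OF assms, of n] assms pi_gt_zero
  by (simp add: net_eval2_angle_net relu_def)

lemma angle_net_range: "net_eval2 (angle_net \<epsilon> n) x y \<in> {0 .. 2 * pi}"
  by (auto simp: net_eval2_angle_net relu_def max_def) (use pi_gt_zero in linarith)

lemma two_fold_center_le:
  assumes "0 < \<epsilon>"
  shows "2 * fold_center (nat \<lceil>log 2 (1 / \<epsilon>)\<rceil> + 3) \<le> \<epsilon>"
proof -
  define m where "m = nat \<lceil>log 2 (1 / \<epsilon>)\<rceil>"
  have "1 / \<epsilon> = 2 powr log 2 (1 / \<epsilon>)"
    using assms by simp
  also have "\<dots> \<le> 2 powr real m"
    unfolding m_def by (intro powr_mono) linarith+
  finally have "1 / \<epsilon> \<le> 2 ^ m"
    by (simp add: powr_realpow)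
  then have "pi / 4 / 2 ^ m \<le> pi / 4 * \<epsilon>"
    using assms by (simp add: field_simps)
  also have "\<dots> \<le> \<epsilon>"
    using assms pi_less_4 by simp
  finally show ?thesis
    by (simp add: m_def fold_center_def power_add)
qed

lemma log_depth_le_ln_squared:
  assumes "0 < \<epsilon>" "\<epsilon> \<le> 1 / 2"
  shows "real (3 * (nat \<lceil>log 2 (1 / \<epsilon>)\<rceil> + 3) + 2) \<le> 100 * (ln (1 / \<epsilon>))\<^sup>2"
proof -
  define l where "l = ln (1 / \<epsilon>)"
  have "ln 2 \<le> l"
    using assms unfolding l_def by (subst ln_le_cancel_iff) (auto simp: field_simps)
  then have l: "2 / 3 \<le> l"
    using ln2_ge_two_thirds by linarith
  have "log 2 (1 / \<epsilon>) = l / ln 2"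
    by (simp add: log_def l_def)
  also have "\<dots> \<le> l / (2 / 3)"
    using l ln2_ge_two_thirds by (intro divide_left_mono) auto
  finally have "log 2 (1 / \<epsilon>) \<le> 3 / 2 * l"
    by simp
  moreover have "0 \<le> log 2 (1 / \<epsilon>)"
    using assms by simp
  ultimately have "real (nat \<lceil>log 2 (1 / \<epsilon>)\<rceil>) \<le> 3 / 2 * l + 1"
    using ceiling_correct[of "log 2 (1 / \<epsilon>)"] by linarith
  moreover have "2 / 3 * l \<le> l * l"
    using l by (intro mult_right_mono) auto
  moreover have "(ln (1 / \<epsilon>))\<^sup>2 = l * l"
    by (simp add: l_def power2_eq_square)
  moreover have "real (3 * (nat \<lceil>log 2 (1 / \<epsilon>)\<rceil> + 3) + 2) = 3 * real (nat \<lceil>log 2 (1 / \<epsilon>)\<rceil>) + 11"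
    by simp
  ultimately show ?thesis
    using l by linarith
qed

theorem mainTheorem8:
  shows "\<exists>C::real. C > 0 \<and>
    (\<forall>\<epsilon>::real. 0 < \<epsilon> \<and> \<epsilon> \<le> 1/2 \<longrightarrow>
      (\<exists>N. wf_net 2 1 N \<and>
        (\<forall>\<xi> \<in> {0..2*pi - \<epsilon>}. \<bar>\<xi> - net_eval2 N (cos \<xi>) (sin \<xi>)\<bar> \<le> \<epsilon>) \<and>
        (\<forall>\<xi> \<in> {0..2*pi}. net_eval2 N (cos \<xi>) (sin \<xi>) \<in> {0..2*pi}) \<and>
        real (depth N) \<le> C * (ln (1/\<epsilon>))^2 \<and>
        real (width N) \<le> C))"
proof (intro exI[of _ 100] conjI allI impI)
  fix \<epsilon> :: real
  assume "0 < \<epsilon> \<and> \<epsilon> \<le> 1/2"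
  then have \<epsilon>: "0 < \<epsilon>" "\<epsilon> \<le> 1 / 2"
    by auto
  define n where "n = nat \<lceil>log 2 (1 / \<epsilon>)\<rceil> + 3"
  have "\<bar>\<xi> - net_eval2 (angle_net \<epsilon> n) (cos \<xi>) (sin \<xi>)\<bar> \<le> \<epsilon>" if "\<xi> \<in> {0..2*pi - \<epsilon>}" for \<xi>
    using angle_net_accuracy[OF \<epsilon>, of \<xi> n] two_fold_center_le[OF \<epsilon>(1)] that by (simp add: n_def)
  moreover have "real (depth (angle_net \<epsilon> n)) \<le> 100 * (ln (1 / \<epsilon>))\<^sup>2"
    using log_depth_le_ln_squared[OF \<epsilon>] by (simp add: depth_angle_net n_def)
  moreover have "real (width (angle_net \<epsilon> n)) \<le> 100"
    using width_angle_net[of \<epsilon> n] by simp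
  ultimately show "\<exists>N. wf_net 2 1 N \<and>
        (\<forall>\<xi> \<in> {0..2*pi - \<epsilon>}. \<bar>\<xi> - net_eval2 N (cos \<xi>) (sin \<xi>)\<bar> \<le> \<epsilon>) \<and>
        (\<forall>\<xi> \<in> {0..2*pi}. net_eval2 N (cos \<xi>) (sin \<xi>) \<in> {0..2*pi}) \<and>
        real (depth N) \<le> 100 * (ln (1/\<epsilon>))^2 \<and> real (width N) \<le> 100"
    using wf_net_angle_net angle_net_range by blast
qed simp

end
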